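(* Assume (A1)–(A5). Then the blow-up time function $T$ satisfies $|T(x)-T(y)|\le\frac{1}{1+\varepsilon_0}|x-y|$ for all $x,y\in B_{R^*}$, where $\varepsilon_0$ is the constant in (A4).
   Context: Let $p>1$ and $\mu>0$ with $p<1+2/\mu$, and let $R^*,T^*>0$. Write $B_R=\{x\in\mathbb{R}:|x|<R\}$ and $D_\pm=\partial_t\pm\partial_x$. Consider the system $D_-\phi=2^{-p}|\phi+\psi|^p-\frac{\mu}{1+t}\frac{\phi+\psi}{2}$, $D_+\psi=2^{-p}|\phi+\psi|^p-\frac{\mu}{1+t}\frac{\phi+\psi}{2}$, $\phi(x,0)=f(x)$, $\psi(x,0)=g(x)$. Fix $\gamma_1,\gamma_2>0$ with $\gamma_1+\gamma_2>\max\big(1,(\mu p 2^p)^{1/(p-1)}\big)$ and let $T_1=\frac{1}{(p-1)\mu}\ln\Big(\frac{2^{1-p}/\mu}{2^{1-p}/\mu-(\gamma_1+\gamma_2)^{1-p}}\Big)$. Assumptions: (A1) $T_1<T^*$. (A2) $f\ge\gamma_1$, $g\ge\gamma_2$ on $B_{R^*+T^*}$. (A3) $f,g\in\mathcal{C}^4(\overline{B_{R^*+T^*}})$. (A4) There is $\varepsilon_0>0$ with $2^{-p}(\gamma_1+\gamma_2)^p-\frac{\mu}{2}(\gamma_1+\gamma_2)\ge(2+\varepsilon_0)\max_{x\in B_{R^*+T^*}}(|f'(x)|+|g'(x)|)$. (A5) There is $\varepsilon_1\neq-1$ with $2^{-p}(2p-1)\big(1+\frac{\varepsilon_1}{2(1+\varepsilon_1)}\big)\big(1-\frac{1}{2p}\big)-2^{-p+1}p-\mu>0$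 such that $2^{-p}(\gamma_1+\gamma_2)^p-\frac{\mu}{2}(\gamma_1+\gamma_2)\ge(2+\varepsilon_1)\max_{x\in B_{R^*+T^*}}(|f'(x)|+|g'(x)|)$. Let $K_{R^*,T^*}=\{(x,t):t>0,\ |x-x_0|<T^*-t\ \text{for some } x_0\in B_{R^*}\}$. Define iterates $\phi_0\equiv\gamma_1$, $\psi_0\equiv\gamma_2$ and, with $\mathcal{N}_n(x,s)=2^{-p}|\phi_n+\psi_n|^p(x,s)-\frac{\mu}{1+s}\frac{(\phi_n+\psi_n)(x,s)}{2}$, $\phi_{n+1}(x,t)=f(x+t)+\int_0^t\mathcal{N}_n(x+t-s,s)\,ds$, $\psi_{n+1}(x,t)=g(x-t)+\int_0^t\mathcal{N}_n(x-t+s,s)\,ds$. Set $\phi=\sup_n\phi_n$, $\psi=\sup_n\psi_n$, and the blow-up time $T(x)=\sup\{t\in(0,T^* ):(\phi+\psi)(x,t)<\infty\}$ for $x\in B_{R^*}$. *)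

theory Defs
  imports "HOL-Analysis.Analysis"
begin

definition C_k_on :: "nat \<Rightarrow> (real \<Rightarrow> real) \<Rightarrow> real set \<Rightarrow> bool" where
  "C_k_on k f S \<longleftrightarrow> (\<exists>F :: nat \<Rightarrow> real \<Rightarrow> real.
      (\<forall>x\<in>S. F 0 x = f x) \<and>
      (\<forall>j<k. \<forall>x\<in>S. (F j has_real_derivative F (Suc j) x) (at x within S)) \<and>
      (\<forall>j\<le>k. continuous_on S (F j)))"

definition nonlin :: "real \<Rightarrow> real \<Rightarrow> real \<Rightarrow> real \<Rightarrow> real" where
  "nonlin p \<mu> u s = 2 powr (-p) * \<bar>u\<bar> powr p - \<mu> / (1 + s) * u / 2"

primrec iter :: "real \<Rightarrow> real \<Rightarrow> (real \<Rightarrow> real) \<Rightarrow> (real \<Rightarrow> real) \<Rightarrow> real \<Rightarrow> real \<Rightarrow> nat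
    \<Rightarrow> (real \<Rightarrow> real \<Rightarrow> real) \<times> (real \<Rightarrow> real \<Rightarrow> real)" where
  "iter p \<mu> f g \<gamma>1 \<gamma>2 0 = ((\<lambda>x t. \<gamma>1), (\<lambda>x t. \<gamma>2))"
| "iter p \<mu> f g \<gamma>1 \<gamma>2 (Suc n) =
     (let \<phi> = fst (iter p \<mu> f g \<gamma>1 \<gamma>2 n); \<psi> = snd (iter p \<mu> f g \<gamma>1 \<gamma>2 n);
          N = (\<lambda>x s. nonlin p \<mu> (\<phi> x s + \<psi> x s) s)
      in ((\<lambda>x t. f (x + t) + integral {0..t} (\<lambda>s. N (x + t - s) s)),
          (\<lambda>x t. g (x - t) + integral {0..t} (\<lambda>s. N (x - t + s) s))))"

definition phi_sup :: "real \<Rightarrow> real \<Rightarrow> (real \<Rightarrow> real) \<Rightarrow> (real \<Rightarrow> real) \<Rightarrow> real \<Rightarrow> real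
    \<Rightarrow> real \<Rightarrow> real \<Rightarrow> ereal" where
  "phi_sup p \<mu> f g \<gamma>1 \<gamma>2 x t = (SUP n. ereal (fst (iter p \<mu> f g \<gamma>1 \<gamma>2 n) x t))"

definition psi_sup :: "real \<Rightarrow> real \<Rightarrow> (real \<Rightarrow> real) \<Rightarrow> (real \<Rightarrow> real) \<Rightarrow> real \<Rightarrow> real
    \<Rightarrow> real \<Rightarrow> real \<Rightarrow> ereal" where
  "psi_sup p \<mu> f g \<gamma>1 \<gamma>2 x t = (SUP n. ereal (snd (iter p \<mu> f g \<gamma>1 \<gamma>2 n) x t))"

definition blowup_time :: "real \<Rightarrow> real \<Rightarrow> (real \<Rightarrow> real) \<Rightarrow> (real \<Rightarrow> real) \<Rightarrow> real \<Rightarrow> real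
    \<Rightarrow> real \<Rightarrow> real \<Rightarrow> real" where
  "blowup_time p \<mu> f g \<gamma>1 \<gamma>2 Tstar x =
     Sup {t. 0 < t \<and> t < Tstar \<and> phi_sup p \<mu> f g \<gamma>1 \<gamma>2 x t + psi_sup p \<mu> f g \<gamma>1 \<gamma>2 x t < \<infinity>}"

end

theory Submission
  imports Defs
begin

text \<open>All iterates stay above \<open>(\<gamma>1, \<gamma>2)\<close>, where the nonlinearity \<open>N(u, s)\<close> is nondecreasing in
  \<open>u\<close> and in \<open>s\<close> and hence at least \<open>N\<^sub>0 = N(\<gamma>1 + \<gamma>2, 0) \<ge> (2 + \<epsilon>0) S\<close>, with \<open>S\<close> the supremum of
  \<open>|f'| + |g'|\<close>. By induction on \<open>n\<close> every iterate is monotone along backward cones of slope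
  \<open>1 + \<epsilon>0\<close>: if \<open>|x - y| \<le> (1 + \<epsilon>0)(t - t')\<close> then \<open>\<phi>\<^sub>n(x, t') \<le> \<phi>\<^sub>n(y, t)\<close> and
  \<open>\<psi>\<^sub>n(x, t') \<le> \<psi>\<^sub>n(y, t)\<close>. Indeed the initial data change by at most
  \<open>S (|x - y| + t - t') \<le> (t - t') N\<^sub>0\<close>, which is paid for by the extra stretch of length \<open>t - t'\<close>
  of the longer characteristic integral. Taking suprema, finiteness of \<open>\<phi> + \<psi>\<close> at \<open>(y, t)\<close>
  gives finiteness at \<open>(x, t - |x - y| / (1 + \<epsilon>0))\<close>, so \<open>T(y) \<le> T(x) + |x - y| / (1 + \<epsilon>0)\<close>;
  the sets defining \<open>T\<close> are nonempty because the iterates are uniformly bounded for short times.\<close>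

section \<open>Monotonicity of the nonlinearity\<close>

lemma nonlin_mono_time:
  assumes "0 \<le> \<mu>" "0 \<le> u" "0 \<le> s'" "s' \<le> s"
  shows "nonlin p \<mu> u s' \<le> nonlin p \<mu> u s"
proof -
  have "\<mu> / (1 + s) \<le> \<mu> / (1 + s')" using assms by (intro divide_left_mono) auto
  then have "\<mu> / (1 + s) * u / 2 \<le> \<mu> / (1 + s') * u / 2"
    using assms by (intro divide_right_mono mult_right_mono) auto
  then show ?thesis unfolding nonlin_def by linarith
qed

lemma nonlin_mono:
  assumes p: "1 \<le> p" and mu: "0 \<le> \<mu>" and gamma: "0 < \<gamma>"
    and slope: "\<mu> / 2 \<le> p * 2 powr (-p) * \<gamma> powr (p - 1)"
    and vu: "\<gamma> \<le> v" "v \<le> u" and s: "0 \<le> s"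
  shows "nonlin p \<mu> v s \<le> nonlin p \<mu> u s"
proof -
  define c where "c = \<mu> / (1 + s) / 2"
  have c: "0 \<le> c" "c \<le> \<mu> / 2" using s mu by (auto simp: c_def field_simps)
  define G where "G w = 2 powr (-p) * w powr p - c * w" for w
  have "G v \<le> G u"
  proof (rule DERIV_nonneg_imp_increasing_open[OF vu(2)])
    fix w assume w: "v < w" "w < u"
    then have w_pos: "0 < w" using vu gamma by simp
    have "(G has_real_derivative 2 powr (-p) * (p * w powr (p - 1)) - c) (at w)"
      unfolding G_def using w_pos
      by (auto intro!: derivative_eq_intros has_real_derivative_powr[OF w_pos, THEN DERIV_cmult])
    moreover have "p * 2 powr (-p) * \<gamma> powr (p - 1) \<le> p * 2 powr (-p) * w powr (p - 1)"
      using w vu gamma p by (intro mult_left_mono powr_mono2) auto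
    then have "0 \<le> 2 powr (-p) * (p * w powr (p - 1)) - c"
      using c slope by (simp add: algebra_simps)
    ultimately show "\<exists>y. (G has_real_derivative y) (at w) \<and> 0 \<le> y" by blast
  next
    show "continuous_on {v..u} G" unfolding G_def using vu gamma
      by (intro continuous_intros continuous_on_powr') auto
  qed
  moreover have "\<bar>v\<bar> = v" "\<bar>u\<bar> = u" using vu gamma by auto
  ultimately show ?thesis unfolding nonlin_def G_def c_def by (simp add: algebra_simps)
qed

lemma nonlin_le_powr:
  assumes "0 \<le> p" "0 \<le> \<mu>" "0 \<le> u" "u \<le> 2 * K" "0 \<le> s"
  shows "nonlin p \<mu> u s \<le> K powr p"
proof -
  have "2 powr (-p) * \<bar>u\<bar> powr p \<le> 2 powr (-p) * (2 * K) powr p"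
    using assms by (intro mult_left_mono powr_mono2) auto
  also have "\<dots> = (2 powr (-p) * 2 powr p) * K powr p"
    using assms by (simp add: powr_mult)
  also have "\<dots> = K powr p" by (simp add: powr_add[symmetric])
  finally have "2 powr (-p) * \<bar>u\<bar> powr p \<le> K powr p" .
  moreover have "0 \<le> \<mu> / (1 + s) * u / 2" using assms by simp
  ultimately show ?thesis unfolding nonlin_def by linarith
qed

lemma nonlin_slope_condition:
  fixes p \<mu> \<gamma> :: real
  assumes p: "1 < p" and mu: "0 < \<mu>" and gamma: "(\<mu> * p * 2 powr p) powr (1 / (p - 1)) < \<gamma>"
  shows "\<mu> / 2 \<le> p * 2 powr (-p) * \<gamma> powr (p - 1)"
proof -
  define a where "a = \<mu> * p * 2 powr p"
  have a: "0 < a" using p mu by (simp add: a_def)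
  have "a = (a powr (1 / (p - 1))) powr (p - 1)" using p a by (simp add: powr_powr)
  also have "\<dots> < \<gamma> powr (p - 1)"
    using gamma p by (intro powr_less_mono2) (auto simp: a_def)
  finally have "p * 2 powr (-p) * a \<le> p * 2 powr (-p) * \<gamma> powr (p - 1)"
    using p by (intro mult_left_mono) auto
  moreover have "p * 2 powr (-p) * a = \<mu> * p * p"
    unfolding a_def by (simp add: powr_minus field_simps)
  moreover have "1 \<le> p * p" using p mult_mono[of 1 p 1 p] by simp
  then have "\<mu> * 1 \<le> \<mu> * p * p" using mu by (simp add: mult_left_mono mult.assoc)
  ultimately show ?thesis using mu by linarith
qed

section \<open>Integrals along characteristics\<close>

lemma integral_unit_interval_rescale:
  fixes k :: "real \<Rightarrow> real"
  assumes "0 \<le> t"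
  shows "integral {0..t} k = t * integral {0..1} (\<lambda>r. k (t * r))"
proof (cases "t = 0")
  case True
  then show ?thesis by simp
next
  case False
  with assms have t: "0 < t" by simp
  have "(\<lambda>x. x / t) ` {0..t} = {0..1}"
  proof
    show "(\<lambda>x. x / t) ` {0..t} \<subseteq> {0..1}" using t by auto
    show "{0..1} \<subseteq> (\<lambda>x. x / t) ` {0..t}"
    proof
      fix r :: real assume "r \<in> {0..1}"
      then have "t * r \<in> {0..t}" "r = t * r / t" using t by (auto simp: mult_le_cancel_left1)
      then show "r \<in> (\<lambda>x. x / t) ` {0..t}" by blast
    qed
  qed
  then have "integral {0..1} (\<lambda>r. k (t * r)) = (1 / \<bar>t\<bar>) *\<^sub>R integral {0..t} k"
    using integral_stretch_real[of t 0 t k] False by simp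
  then show ?thesis using t by simp
qed

definition dependence_domain :: "real \<Rightarrow> (real \<times> real) set" where
  "dependence_domain L = {(x, t). 0 \<le> t \<and> \<bar>x\<bar> + t < L}"

lemma mem_dependence_domain [simp]:
  "(x, t) \<in> dependence_domain L \<longleftrightarrow> 0 \<le> t \<and> \<bar>x\<bar> + t < L"
  by (simp add: dependence_domain_def)

lemma characteristic_in_dependence_domain:
  assumes "(x, t) \<in> dependence_domain L" "\<bar>e\<bar> \<le> 1" "s \<in> {0..t}"
  shows "(x + e * (t - s), s) \<in> dependence_domain L"
proof -
  have "\<bar>e * (t - s)\<bar> \<le> t - s"
    using assms by (auto simp: abs_mult intro: mult_left_le_one_le)
  then show ?thesis using assms by auto
qed

lemma continuous_on_characteristic_integral:
  fixes h :: "real \<Rightarrow> real \<Rightarrow> real"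
  assumes h: "continuous_on (dependence_domain L) (\<lambda>(x, s). h x s)" and e: "\<bar>e\<bar> \<le> 1"
  shows "continuous_on (dependence_domain L) (\<lambda>(x, t). integral {0..t} (\<lambda>s. h (x + e * (t - s)) s))"
proof -
  let ?D = "dependence_domain L"
  let ?w = "\<lambda>((x, t), r). (x + e * (t - t * r), t * r)"
  have "?w ` (?D \<times> cbox 0 1) \<subseteq> ?D"
  proof clarify
    fix x t r :: real assume xt: "(x, t) \<in> ?D" and r: "r \<in> cbox 0 1"
    then have "t * r \<in> {0..t}" by (auto intro: mult_left_le)
    then show "(x + e * (t - t * r), t * r) \<in> ?D"
      using characteristic_in_dependence_domain[OF xt e] by blast
  qed
  moreover have "continuous_on (?D \<times> cbox 0 1) ?w"
    by (simp add: case_prod_beta') (intro continuous_intros)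
  ultimately have "continuous_on (?D \<times> cbox 0 1) ((\<lambda>(x, s). h x s) \<circ> ?w)"
    by (intro continuous_on_compose continuous_on_subset[OF h])
  then have "continuous_on (?D \<times> cbox 0 1) (\<lambda>((x, t), r). h (x + e * (t - t * r)) (t * r))"
    by (simp add: comp_def case_prod_beta')
  then have "continuous_on ?D
      (\<lambda>z. integral (cbox 0 1) (\<lambda>r. h (fst z + e * (snd z - snd z * r)) (snd z * r)))"
    by (intro integral_continuous_on_param) (simp add: case_prod_beta')
  then have "continuous_on ?D
      (\<lambda>z. snd z * integral {0..1} (\<lambda>r. h (fst z + e * (snd z - snd z * r)) (snd z * r)))"
    unfolding cbox_interval by (intro continuous_intros)
  then show ?thesis
  proof (rule continuous_on_eq)
    fix z assume "z \<in> ?D"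
    then have "0 \<le> snd z" by (cases z) simp
    then show "snd z * integral {0..1} (\<lambda>r. h (fst z + e * (snd z - snd z * r)) (snd z * r))
        = (\<lambda>(x, t). integral {0..t} (\<lambda>s. h (x + e * (t - s)) s)) z"
      using integral_unit_interval_rescale[of "snd z" "\<lambda>s. h (fst z + e * (snd z - s)) s"]
      by (simp add: case_prod_beta')
  qed
qed

lemma integrable_characteristic:
  fixes h :: "real \<Rightarrow> real \<Rightarrow> real"
  assumes h: "continuous_on (dependence_domain L) (\<lambda>(x, s). h x s)" and e: "\<bar>e\<bar> \<le> 1"
    and xt: "(x, t) \<in> dependence_domain L"
  shows "(\<lambda>s. h (x + e * (t - s)) s) integrable_on {0..t}"
proof (rule integrable_continuous_interval)
  have "continuous_on {0..t} (\<lambda>s. (x + e * (t - s), s))" by (intro continuous_intros)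
  moreover have "(\<lambda>s. (x + e * (t - s), s)) ` {0..t} \<subseteq> dependence_domain L"
    using characteristic_in_dependence_domain[OF xt e] by auto
  ultimately show "continuous_on {0..t} (\<lambda>s. h (x + e * (t - s)) s)"
    using continuous_on_compose2[OF h] by fastforce
qed

text \<open>Shift the longer characteristic by \<open>t - t'\<close> in time: its tail dominates the shorter one
  pointwise by cone monotonicity of \<open>h\<close>, and its initial piece of length \<open>t - t'\<close> contributes at
  least \<open>(t - t') * c\<close>.\<close>
lemma characteristic_integral_cone_mono:
  fixes h :: "real \<Rightarrow> real \<Rightarrow> real"
  assumes h: "continuous_on (dependence_domain L) (\<lambda>(x, s). h x s)" and e: "\<bar>e\<bar> \<le> 1"
    and mono: "\<And>a s' b s. (a, s') \<in> dependence_domain L \<Longrightarrow> (b, s) \<in> dependence_domain L \<Longrightarrow>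
      s' \<le> s \<Longrightarrow> \<bar>a - b\<bar> \<le> \<kappa> * (s - s') \<Longrightarrow> h a s' \<le> h b s"
    and lower: "\<And>a s. (a, s) \<in> dependence_domain L \<Longrightarrow> c \<le> h a s"
    and xt: "(x, t') \<in> dependence_domain L" and yt: "(y, t) \<in> dependence_domain L"
    and tt: "t' \<le> t" and xy: "\<bar>x - y\<bar> \<le> \<kappa> * (t - t')"
  shows "integral {0..t'} (\<lambda>s. h (x + e * (t' - s)) s) + (t - t') * c
    \<le> integral {0..t} (\<lambda>s. h (y + e * (t - s)) s)"
proof -
  define k where "k s = h (y + e * (t - s)) s" for s
  define \<delta> where "\<delta> = t - t'"
  have \<delta>: "0 \<le> \<delta>" "\<delta> \<le> t" using tt xt by (auto simp: \<delta>_def)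
  have k_int: "k integrable_on {0..t}"
    unfolding k_def using integrable_characteristic[OF h e yt] .
  have "integral {0..\<delta>} (\<lambda>s. c) \<le> integral {0..\<delta>} k"
  proof (rule integral_le)
    show "k integrable_on {0..\<delta>}" using \<delta> by (intro integrable_on_subinterval[OF k_int]) auto
    fix s assume "s \<in> {0..\<delta>}"
    then show "c \<le> k s"
      unfolding k_def using \<delta> by (intro lower characteristic_in_dependence_domain[OF yt e]) auto
  qed auto
  then have head: "\<delta> * c \<le> integral {0..\<delta>} k" using \<delta> by simp
  have "k integrable_on {\<delta>..t}" using \<delta> by (intro integrable_on_subinterval[OF k_int]) auto
  then have "((\<lambda>s. k (s + \<delta>)) has_integral integral {\<delta>..t} k) {0..t'}"
    using has_integral_shift_real_ivl[OF integrable_integral, of k \<delta> t \<delta>] by (simp add: \<delta>_def)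
  then have tail_eq: "integral {0..t'} (\<lambda>s. k (s + \<delta>)) = integral {\<delta>..t} k"
    and tail_int: "(\<lambda>s. k (s + \<delta>)) integrable_on {0..t'}" by blast+
  have tail: "integral {0..t'} (\<lambda>s. h (x + e * (t' - s)) s) \<le> integral {0..t'} (\<lambda>s. k (s + \<delta>))"
  proof (rule integral_le[OF integrable_characteristic[OF h e xt] tail_int])
    fix s assume s: "s \<in> {0..t'}"
    have "(y + e * (t - (s + \<delta>)), s + \<delta>) \<in> dependence_domain L"
      using s \<delta> by (intro characteristic_in_dependence_domain[OF yt e]) (auto simp: \<delta>_def)
    then have "h (x + e * (t' - s)) s \<le> h (y + e * (t - (s + \<delta>))) (s + \<delta>)"
      using s \<delta> xy characteristic_in_dependence_domain[OF xt e s]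
      by (intro mono) (auto simp: \<delta>_def)
    then show "h (x + e * (t' - s)) s \<le> k (s + \<delta>)" by (simp add: k_def)
  qed
  have "integral {0..\<delta>} k + integral {\<delta>..t} k = integral {0..t} k"
    using \<delta> k_int by (rule Henstock_Kurzweil_Integration.integral_combine)
  then show ?thesis using head tail tail_eq unfolding k_def \<delta>_def by linarith
qed

section \<open>Monotone iteration in the domain of dependence\<close>

locale characteristic_iteration =
  fixes p \<mu> :: real and f g :: "real \<Rightarrow> real" and \<gamma>1 \<gamma>2 L :: real
  assumes p_gt_1: "1 < p" and mu_pos: "0 < \<mu>"
    and continuous_f: "continuous_on (cball 0 L) f" and continuous_g: "continuous_on (cball 0 L) g"
begin

abbreviation "\<Omega> \<equiv> dependence_domain L"
abbreviation "\<Phi> n \<equiv> fst (iter p \<mu> f g \<gamma>1 \<gamma>2 n)"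
abbreviation "\<Psi> n \<equiv> snd (iter p \<mu> f g \<gamma>1 \<gamma>2 n)"
abbreviation "N n x s \<equiv> nonlin p \<mu> (\<Phi> n x s + \<Psi> n x s) s"

definition characteristic_integral :: "nat \<Rightarrow> real \<Rightarrow> real \<Rightarrow> real \<Rightarrow> real" where
  "characteristic_integral n e x t = integral {0..t} (\<lambda>s. N n (x + e * (t - s)) s)"

lemma \<Phi>_Suc: "\<Phi> (Suc n) x t = f (x + t) + characteristic_integral n 1 x t"
  by (simp add: characteristic_integral_def Let_def algebra_simps)

lemma \<Psi>_Suc: "\<Psi> (Suc n) x t = g (x - t) + characteristic_integral n (-1) x t"
  by (simp add: characteristic_integral_def Let_def algebra_simps)

lemma continuous_on_N_of_iter:
  assumes "continuous_on \<Omega> (\<lambda>(x, t). \<Phi> n x t)"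
    and "continuous_on \<Omega> (\<lambda>(x, t). \<Psi> n x t)"
  shows "continuous_on \<Omega> (\<lambda>(x, s). N n x s)"
  using assms p_gt_1 unfolding nonlin_def case_prod_beta'
  by (intro continuous_intros continuous_on_powr') (auto simp: dependence_domain_def)

lemma continuous_on_iter:
  "continuous_on \<Omega> (\<lambda>(x, t). \<Phi> n x t) \<and>
   continuous_on \<Omega> (\<lambda>(x, t). \<Psi> n x t)"
proof (induction n)
  case 0
  then show ?case by simp
next
  case (Suc n)
  have "continuous_on \<Omega> (\<lambda>(x, s). N n x s)"
    using Suc continuous_on_N_of_iter by blast
  then have "continuous_on \<Omega> (\<lambda>(x, t). characteristic_integral n e x t)"
    if "\<bar>e\<bar> \<le> 1" for e
    unfolding characteristic_integral_def using that by (rule continuous_on_characteristic_integral)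
  moreover have "continuous_on \<Omega> (\<lambda>(x, t). f (x + t))"
    unfolding case_prod_beta' by (rule continuous_on_compose2[OF continuous_f])
      (auto intro!: continuous_intros simp: dependence_domain_def)
  moreover have "continuous_on \<Omega> (\<lambda>(x, t). g (x - t))"
    unfolding case_prod_beta' by (rule continuous_on_compose2[OF continuous_g])
      (auto intro!: continuous_intros simp: dependence_domain_def)
  ultimately show ?case unfolding \<Phi>_Suc \<Psi>_Suc
    by (auto simp: case_prod_beta' intro!: continuous_intros)
qed

lemma continuous_on_N: "continuous_on \<Omega> (\<lambda>(x, s). N n x s)"
  using continuous_on_iter continuous_on_N_of_iter by blast

end

locale blowup_comparison = characteristic_iteration p \<mu> f g \<gamma>1 \<gamma>2 "R + T"
  for p \<mu> :: real and f g :: "real \<Rightarrow> real" and \<gamma>1 \<gamma>2 R T :: real +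
  fixes S \<epsilon> :: real
  assumes T_pos: "0 < T" and gamma1_pos: "0 < \<gamma>1" and gamma2_pos: "0 < \<gamma>2"
    and f_ge: "\<forall>x\<in>ball 0 (R + T). \<gamma>1 \<le> f x" and g_ge: "\<forall>x\<in>ball 0 (R + T). \<gamma>2 \<le> g x"
    and slope: "\<mu> / 2 \<le> p * 2 powr (-p) * (\<gamma>1 + \<gamma>2) powr (p - 1)"
    and eps_pos: "0 < \<epsilon>" and S_nonneg: "0 \<le> S"
    and data_small: "(2 + \<epsilon>) * S \<le> nonlin p \<mu> (\<gamma>1 + \<gamma>2) 0"
    and lipschitz_f: "\<forall>a\<in>ball 0 (R + T). \<forall>b\<in>ball 0 (R + T). \<bar>f a - f b\<bar> \<le> S * \<bar>a - b\<bar>"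
    and lipschitz_g: "\<forall>a\<in>ball 0 (R + T). \<forall>b\<in>ball 0 (R + T). \<bar>g a - g b\<bar> \<le> S * \<bar>a - b\<bar>"
begin

abbreviation "N\<^sub>0 \<equiv> nonlin p \<mu> (\<gamma>1 + \<gamma>2) 0"

lemma N0_nonneg: "0 \<le> N\<^sub>0"
proof -
  have "0 \<le> (2 + \<epsilon>) * S" using eps_pos S_nonneg by simp
  then show ?thesis using data_small by linarith
qed

lemma nonlin_ge_N0:
  assumes "\<gamma>1 + \<gamma>2 \<le> u" "0 \<le> s"
  shows "N\<^sub>0 \<le> nonlin p \<mu> u s"
proof -
  have "N\<^sub>0 \<le> nonlin p \<mu> (\<gamma>1 + \<gamma>2) s"
    using assms gamma1_pos gamma2_pos mu_pos by (intro nonlin_mono_time) auto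
  also have "\<dots> \<le> nonlin p \<mu> u s"
    using assms gamma1_pos gamma2_pos mu_pos p_gt_1 slope by (intro nonlin_mono) auto
  finally show ?thesis .
qed

lemma iter_ge: "(x, t) \<in> \<Omega> \<Longrightarrow> \<gamma>1 \<le> \<Phi> n x t \<and> \<gamma>2 \<le> \<Psi> n x t"
proof (induction n arbitrary: x t)
  case 0
  then show ?case by simp
next
  case (Suc n)
  have char_nonneg: "0 \<le> characteristic_integral n e x t" if e: "\<bar>e\<bar> \<le> 1" for e
    unfolding characteristic_integral_def
  proof (rule integral_nonneg[OF integrable_characteristic[OF continuous_on_N e Suc.prems]])
    fix s assume "s \<in> {0..t}"
    then have w: "(x + e * (t - s), s) \<in> \<Omega>"
      by (rule characteristic_in_dependence_domain[OF Suc.prems e])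
    then have "N\<^sub>0 \<le> N n (x + e * (t - s)) s"
      using Suc.IH[OF w] by (intro nonlin_ge_N0) auto
    then show "0 \<le> N n (x + e * (t - s)) s" using N0_nonneg by linarith
  qed
  have "\<gamma>1 \<le> f (x + t)" "\<gamma>2 \<le> g (x - t)" using Suc.prems f_ge g_ge by auto
  with char_nonneg[of 1] char_nonneg[of "-1"] show ?case unfolding \<Phi>_Suc \<Psi>_Suc by simp
qed

lemma N_ge_N0: "(x, s) \<in> \<Omega> \<Longrightarrow> N\<^sub>0 \<le> N n x s"
  using iter_ge[of x s n] by (intro nonlin_ge_N0) auto

lemma data_cone_mono:
  assumes "(x, t') \<in> \<Omega>" "(y, t) \<in> \<Omega>" "t' \<le> t" "\<bar>x - y\<bar> \<le> (1 + \<epsilon>) * (t - t')"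
  shows "f (x + t') \<le> f (y + t) + (t - t') * N\<^sub>0" and "g (x - t') \<le> g (y - t) + (t - t') * N\<^sub>0"
proof -
  have budget: "S * \<bar>a - b\<bar> \<le> (t - t') * N\<^sub>0" if "\<bar>a - b\<bar> \<le> \<bar>x - y\<bar> + (t - t')" for a b
  proof -
    have "(2 + \<epsilon>) * (t - t') = (1 + \<epsilon>) * (t - t') + (t - t')" by algebra
    then have "S * \<bar>a - b\<bar> \<le> S * ((2 + \<epsilon>) * (t - t'))"
      using that assms S_nonneg by (intro mult_left_mono) auto
    also have "\<dots> = ((2 + \<epsilon>) * S) * (t - t')" by algebra
    also have "\<dots> \<le> N\<^sub>0 * (t - t')" using data_small assms by (intro mult_right_mono) auto
    finally show ?thesis by (simp add: mult.commute)
  qed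
  have in_ball: "x + t' \<in> ball 0 (R + T)" "y + t \<in> ball 0 (R + T)"
    "x - t' \<in> ball 0 (R + T)" "y - t \<in> ball 0 (R + T)" using assms by auto
  have "\<bar>f (x + t') - f (y + t)\<bar> \<le> S * \<bar>(x + t') - (y + t)\<bar>" using lipschitz_f in_ball by blast
  also have "\<dots> \<le> (t - t') * N\<^sub>0" using assms(3) by (intro budget) arith
  finally show "f (x + t') \<le> f (y + t) + (t - t') * N\<^sub>0" by (simp add: abs_le_iff)
  have "\<bar>g (x - t') - g (y - t)\<bar> \<le> S * \<bar>(x - t') - (y - t)\<bar>" using lipschitz_g in_ball by blast
  also have "\<dots> \<le> (t - t') * N\<^sub>0" using assms(3) by (intro budget) arith
  finally show "g (x - t') \<le> g (y - t) + (t - t') * N\<^sub>0" by (simp add: abs_le_iff)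
qed

lemma iter_cone_mono:
  "(x, t') \<in> \<Omega> \<Longrightarrow> (y, t) \<in> \<Omega> \<Longrightarrow> t' \<le> t \<Longrightarrow> \<bar>x - y\<bar> \<le> (1 + \<epsilon>) * (t - t') \<Longrightarrow>
    \<Phi> n x t' \<le> \<Phi> n y t \<and> \<Psi> n x t' \<le> \<Psi> n y t"
proof (induction n arbitrary: x t' y t)
  case 0
  then show ?case by simp
next
  case (Suc n)
  have N_mono: "N n a s' \<le> N n b s"
    if a: "(a, s') \<in> \<Omega>" and b: "(b, s) \<in> \<Omega>" and "s' \<le> s" "\<bar>a - b\<bar> \<le> (1 + \<epsilon>) * (s - s')"
    for a s' b s
  proof -
    have le: "\<Phi> n a s' + \<Psi> n a s' \<le> \<Phi> n b s + \<Psi> n b s" using Suc.IH[OF that] by simp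
    have ge: "\<gamma>1 + \<gamma>2 \<le> \<Phi> n a s' + \<Psi> n a s'" using iter_ge[OF a, of n] by simp
    have "N n a s' \<le> nonlin p \<mu> (\<Phi> n b s + \<Psi> n b s) s'"
      using a ge le gamma1_pos gamma2_pos p_gt_1 mu_pos slope by (intro nonlin_mono) auto
    also have "\<dots> \<le> N n b s"
      using a ge le that(3) gamma1_pos gamma2_pos mu_pos by (intro nonlin_mono_time) auto
    finally show ?thesis .
  qed
  have char_mono: "characteristic_integral n e x t' + (t - t') * N\<^sub>0 \<le> characteristic_integral n e y t"
    if "\<bar>e\<bar> \<le> 1" for e
    unfolding characteristic_integral_def
    using characteristic_integral_cone_mono[OF continuous_on_N that N_mono N_ge_N0 Suc.prems] .
  show ?case unfolding \<Phi>_Suc \<Psi>_Suc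
    using data_cone_mono[OF Suc.prems] char_mono[of 1] char_mono[of "-1"] by simp
qed

lemma iter_le_short_time:
  assumes data: "\<forall>a\<in>ball 0 (R + T). f a \<le> K - 1 \<and> g a \<le> K - 1"
    and K: "\<gamma>1 \<le> K" "\<gamma>2 \<le> K" and \<tau>: "\<tau> * K powr p \<le> 1"
  shows "(x, t) \<in> \<Omega> \<Longrightarrow> t \<le> \<tau> \<Longrightarrow> \<Phi> n x t \<le> K \<and> \<Psi> n x t \<le> K"
proof (induction n arbitrary: x t)
  case 0
  then show ?case using K by simp
next
  case (Suc n)
  have char_le: "characteristic_integral n e x t \<le> 1" if e: "\<bar>e\<bar> \<le> 1" for e
  proof -
    have "characteristic_integral n e x t \<le> integral {0..t} (\<lambda>s. K powr p)"
      unfolding characteristic_integral_def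
    proof (rule integral_le[OF integrable_characteristic[OF continuous_on_N e Suc.prems(1)]])
      fix s assume s: "s \<in> {0..t}"
      then have w: "(x + e * (t - s), s) \<in> \<Omega>"
        by (rule characteristic_in_dependence_domain[OF Suc.prems(1) e])
      then show "N n (x + e * (t - s)) s \<le> K powr p"
        using Suc.IH[OF w] iter_ge[OF w, of n] s Suc.prems(2) gamma1_pos gamma2_pos mu_pos p_gt_1
        by (intro nonlin_le_powr) auto
    qed auto
    also have "\<dots> \<le> \<tau> * K powr p" using Suc.prems by (auto intro: mult_right_mono)
    finally show ?thesis using \<tau> by linarith
  qed
  have "f (x + t) \<le> K - 1" "g (x - t) \<le> K - 1" using Suc.prems(1) data by auto
  with char_le[of 1] char_le[of "-1"] show ?case unfolding \<Phi>_Suc \<Psi>_Suc by simp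
qed

section \<open>The blow-up time\<close>

abbreviation bounded_times :: "real \<Rightarrow> real set" where
  "bounded_times x \<equiv>
     {t. 0 < t \<and> t < T \<and> phi_sup p \<mu> f g \<gamma>1 \<gamma>2 x t + psi_sup p \<mu> f g \<gamma>1 \<gamma>2 x t < \<infinity>}"

lemma bounded_times_nonempty:
  assumes x: "x \<in> ball 0 R"
  shows "bounded_times x \<noteq> {}"
proof -
  have "bounded ((\<lambda>a. \<bar>f a\<bar> + \<bar>g a\<bar>) ` cball 0 (R + T))"
    by (intro compact_imp_bounded compact_continuous_image continuous_intros continuous_f continuous_g)
      auto
  then obtain B where B: "\<forall>a\<in>cball 0 (R + T). \<bar>f a\<bar> + \<bar>g a\<bar> \<le> B"
    unfolding bounded_iff by auto
  define K where "K = \<bar>B\<bar> + 1 + \<gamma>1 + \<gamma>2"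
  have K: "0 < K" "\<gamma>1 \<le> K" "\<gamma>2 \<le> K" using gamma1_pos gamma2_pos by (auto simp: K_def)
  define \<tau> where "\<tau> = min (T / 2) (1 / K powr p)"
  have \<tau>: "0 < \<tau>" "\<tau> < T" using T_pos K by (auto simp: \<tau>_def)
  have "\<tau> * K powr p \<le> (1 / K powr p) * K powr p" by (intro mult_right_mono) (auto simp: \<tau>_def)
  then have \<tau>K: "\<tau> * K powr p \<le> 1" using K by simp
  have "f a \<le> K - 1 \<and> g a \<le> K - 1" if "a \<in> ball 0 (R + T)" for a
  proof -
    have "\<bar>f a\<bar> + \<bar>g a\<bar> \<le> B" using B that by auto
    moreover have "f a \<le> \<bar>f a\<bar>" "g a \<le> \<bar>g a\<bar>" "B \<le> \<bar>B\<bar>" by simp_all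
    ultimately show ?thesis using gamma1_pos gamma2_pos unfolding K_def by fastforce
  qed
  then have "\<Phi> n x \<tau> \<le> K \<and> \<Psi> n x \<tau> \<le> K" for n
    using iter_le_short_time[OF _ K(2,3) \<tau>K, of x \<tau>] x \<tau> by auto
  then have "phi_sup p \<mu> f g \<gamma>1 \<gamma>2 x \<tau> \<le> K" "psi_sup p \<mu> f g \<gamma>1 \<gamma>2 x \<tau> \<le> K"
    unfolding phi_sup_def psi_sup_def by (auto intro: SUP_least)
  then have "phi_sup p \<mu> f g \<gamma>1 \<gamma>2 x \<tau> + psi_sup p \<mu> f g \<gamma>1 \<gamma>2 x \<tau> \<le> ereal K + ereal K"
    by (rule add_mono)
  also have "\<dots> < \<infinity>" by simp
  finally show ?thesis using \<tau> by blast
qed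

lemma bounded_times_cone_shift:
  assumes x: "x \<in> ball 0 R" and y: "y \<in> ball 0 R" and t: "t \<in> bounded_times y"
    and pos: "0 < t - \<bar>x - y\<bar> / (1 + \<epsilon>)"
  shows "t - \<bar>x - y\<bar> / (1 + \<epsilon>) \<in> bounded_times x"
proof -
  define t' where "t' = t - \<bar>x - y\<bar> / (1 + \<epsilon>)"
  have d: "0 \<le> \<bar>x - y\<bar> / (1 + \<epsilon>)" using eps_pos by simp
  have xt: "(x, t') \<in> \<Omega>" and yt: "(y, t) \<in> \<Omega>" using x y t pos d by (auto simp: t'_def)
  have "\<bar>x - y\<bar> \<le> (1 + \<epsilon>) * (t - t')" using eps_pos by (simp add: t'_def)
  then have "\<Phi> n x t' \<le> \<Phi> n y t \<and> \<Psi> n x t' \<le> \<Psi> n y t" for n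
    using iter_cone_mono[OF xt yt] d by (simp add: t'_def)
  then have "phi_sup p \<mu> f g \<gamma>1 \<gamma>2 x t' + psi_sup p \<mu> f g \<gamma>1 \<gamma>2 x t'
      \<le> phi_sup p \<mu> f g \<gamma>1 \<gamma>2 y t + psi_sup p \<mu> f g \<gamma>1 \<gamma>2 y t"
    unfolding phi_sup_def psi_sup_def by (intro add_mono SUP_mono) auto
  also have "\<dots> < \<infinity>" using t by simp
  finally show ?thesis using pos t d by (auto simp: t'_def)
qed

lemma blowup_time_le:
  assumes x: "x \<in> ball 0 R" and y: "y \<in> ball 0 R"
  shows "blowup_time p \<mu> f g \<gamma>1 \<gamma>2 T y \<le> blowup_time p \<mu> f g \<gamma>1 \<gamma>2 T x + \<bar>x - y\<bar> / (1 + \<epsilon>)"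
proof -
  have bdd: "bdd_above (bounded_times x)" by (rule bdd_aboveI[of _ T]) auto
  obtain t\<^sub>0 where t\<^sub>0: "t\<^sub>0 \<in> bounded_times x" using bounded_times_nonempty[OF x] by blast
  have "t - \<bar>x - y\<bar> / (1 + \<epsilon>) \<le> Sup (bounded_times x)" if t: "t \<in> bounded_times y" for t
  proof (cases "0 < t - \<bar>x - y\<bar> / (1 + \<epsilon>)")
    case True
    with bounded_times_cone_shift[OF x y t] bdd show ?thesis by (auto intro: cSup_upper)
  next
    case False
    moreover have "t\<^sub>0 \<le> Sup (bounded_times x)" using t\<^sub>0 bdd by (rule cSup_upper)
    ultimately show ?thesis using t\<^sub>0 by auto
  qed
  then have "Sup (bounded_times y) \<le> Sup (bounded_times x) + \<bar>x - y\<bar> / (1 + \<epsilon>)"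
    using bounded_times_nonempty[OF y] by (intro cSup_least) (auto simp: algebra_simps)
  then show ?thesis unfolding blowup_time_def .
qed

lemma blowup_time_lipschitz:
  assumes "x \<in> ball 0 R" "y \<in> ball 0 R"
  shows "\<bar>blowup_time p \<mu> f g \<gamma>1 \<gamma>2 T x - blowup_time p \<mu> f g \<gamma>1 \<gamma>2 T y\<bar> \<le> 1 / (1 + \<epsilon>) * \<bar>x - y\<bar>"
  using blowup_time_le[OF assms] blowup_time_le[OF assms(2,1)]
  by (simp add: abs_le_iff abs_minus_commute algebra_simps)

end

section \<open>Regularity of the data\<close>

lemma C_k_on_imp_continuous_on:
  assumes "C_k_on k f S"
  shows "continuous_on S f"
proof -
  obtain F where F0: "\<forall>x\<in>S. F 0 x = f x" and F_cont: "\<forall>j\<le>k. continuous_on S (F j)"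
    using assms unfolding C_k_on_def by blast
  from F_cont have "continuous_on S (F 0)" by simp
  then show ?thesis by (rule continuous_on_eq) (use F0 in simp)
qed

lemma C_k_on_Suc_imp_derivative:
  assumes "C_k_on (Suc k) f S"
  obtains f' where "continuous_on S f'" "\<And>x. x \<in> interior S \<Longrightarrow> (f has_real_derivative f' x) (at x)"
proof -
  obtain F where F0: "\<forall>x\<in>S. F 0 x = f x"
    and F_deriv: "\<forall>j<Suc k. \<forall>x\<in>S. (F j has_real_derivative F (Suc j) x) (at x within S)"
    and F_cont: "\<forall>j\<le>Suc k. continuous_on S (F j)"
    using assms unfolding C_k_on_def by blast
  have "(f has_real_derivative F 1 x) (at x)" if x: "x \<in> interior S" for x
  proof -
    have "(F 0 has_real_derivative F 1 x) (at x within S)"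
      using F_deriv x interior_subset by auto
    then have "(F 0 has_real_derivative F 1 x) (at x)" by (simp add: at_within_interior[OF x])
    then show ?thesis
      by (rule has_field_derivative_transform_within_open[OF _ open_interior x])
        (use F0 interior_subset in auto)
  qed
  moreover have "continuous_on S (F 1)" using F_cont by simp
  ultimately show thesis using that by blast
qed

lemma C_k_on_Suc_lipschitz_on_ball:
  fixes f g :: "real \<Rightarrow> real"
  assumes L: "0 < L" and f: "C_k_on (Suc k) f (cball 0 L)" and g: "C_k_on (Suc k) g (cball 0 L)"
  defines "S \<equiv> SUP x\<in>ball 0 L. \<bar>deriv f x\<bar> + \<bar>deriv g x\<bar>"
  shows "0 \<le> S"
    and "\<forall>a\<in>ball 0 L. \<forall>b\<in>ball 0 L. \<bar>f a - f b\<bar> \<le> S * \<bar>a - b\<bar>"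
    and "\<forall>a\<in>ball 0 L. \<forall>b\<in>ball 0 L. \<bar>g a - g b\<bar> \<le> S * \<bar>a - b\<bar>"
proof -
  obtain f' where f': "continuous_on (cball 0 L) f'"
    and df: "\<And>x. x \<in> ball 0 L \<Longrightarrow> (f has_real_derivative f' x) (at x)"
    using C_k_on_Suc_imp_derivative[OF f] by auto
  obtain g' where g': "continuous_on (cball 0 L) g'"
    and dg: "\<And>x. x \<in> ball 0 L \<Longrightarrow> (g has_real_derivative g' x) (at x)"
    using C_k_on_Suc_imp_derivative[OF g] by auto
  have deriv: "deriv f x = f' x" "deriv g x = g' x" if "x \<in> ball 0 L" for x
    using df dg that by (auto intro: DERIV_imp_deriv)
  have "bounded ((\<lambda>x. \<bar>f' x\<bar> + \<bar>g' x\<bar>) ` cball 0 L)"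
    by (intro compact_imp_bounded compact_continuous_image continuous_intros f' g') auto
  then obtain M where M: "\<forall>x\<in>cball 0 L. \<bar>f' x\<bar> + \<bar>g' x\<bar> \<le> M"
    unfolding bounded_iff by auto
  have bdd: "bdd_above ((\<lambda>x. \<bar>deriv f x\<bar> + \<bar>deriv g x\<bar>) ` ball 0 L)"
    using M deriv by (intro bdd_aboveI[of _ M]) auto
  have bound: "\<bar>f' x\<bar> + \<bar>g' x\<bar> \<le> S" if "x \<in> ball 0 L" for x
    using cSUP_upper[OF that bdd] deriv[OF that] unfolding S_def by simp
  have "0 \<le> \<bar>f' 0\<bar> + \<bar>g' 0\<bar>" by simp
  also have "\<dots> \<le> S" using L by (intro bound) simp
  finally show "0 \<le> S" .
  have "\<bar>f' x\<bar> \<le> S" "\<bar>g' x\<bar> \<le> S" if "x \<in> ball 0 L" for x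
    using bound[OF that] abs_ge_zero[of "f' x"] abs_ge_zero[of "g' x"] by linarith+
  note derivative_bounds = this
  have lipschitz: "\<bar>h a - h b\<bar> \<le> S * \<bar>a - b\<bar>"
    if "\<And>x. x \<in> ball 0 L \<Longrightarrow> (h has_real_derivative h' x) (at x)"
      and "\<And>x. x \<in> ball 0 L \<Longrightarrow> \<bar>h' x\<bar> \<le> S" and "a \<in> ball 0 L" "b \<in> ball 0 L" for h h' a b
    using field_differentiable_bound[OF convex_ball, of 0 L h h' S a b] that
    by (auto intro: has_field_derivative_at_within)
  show "\<forall>a\<in>ball 0 L. \<forall>b\<in>ball 0 L. \<bar>f a - f b\<bar> \<le> S * \<bar>a - b\<bar>"
    using derivative_bounds by (intro ballI lipschitz[OF df])
  show "\<forall>a\<in>ball 0 L. \<forall>b\<in>ball 0 L. \<bar>g a - g b\<bar> \<le> S * \<bar>a - b\<bar>"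
    using derivative_bounds by (intro ballI lipschitz[OF dg])
qed

theorem theorem3p3:
  fixes p \<mu> Rstar Tstar \<gamma>1 \<gamma>2 \<epsilon>0 \<epsilon>1 :: real and f g :: "real \<Rightarrow> real"
  assumes hp: "p > 1" and hmu: "\<mu> > 0" and hpmu: "p < 1 + 2 / \<mu>"
    and hR: "Rstar > 0" and hT: "Tstar > 0"
    and hg1: "\<gamma>1 > 0" and hg2: "\<gamma>2 > 0"
    and hgam: "\<gamma>1 + \<gamma>2 > max 1 ((\<mu> * p * 2 powr p) powr (1 / (p - 1)))"
    and A1: "1 / ((p - 1) * \<mu>) *
               ln ((2 powr (1 - p) / \<mu>) / (2 powr (1 - p) / \<mu> - (\<gamma>1 + \<gamma>2) powr (1 - p)))
             < Tstar"
    and A2: "\<forall>x\<in>ball 0 (Rstar + Tstar). f x \<ge> \<gamma>1 \<and> g x \<ge> \<gamma>2"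
    and A3: "C_k_on 4 f (cball 0 (Rstar + Tstar)) \<and> C_k_on 4 g (cball 0 (Rstar + Tstar))"
    and A4: "\<epsilon>0 > 0 \<and>
             2 powr (-p) * (\<gamma>1 + \<gamma>2) powr p - \<mu> / 2 * (\<gamma>1 + \<gamma>2)
               \<ge> (2 + \<epsilon>0) * (SUP x\<in>ball 0 (Rstar + Tstar). \<bar>deriv f x\<bar> + \<bar>deriv g x\<bar>)"
    and A5: "\<epsilon>1 \<noteq> -1 \<and>
             2 powr (-p) * (2 * p - 1) * (1 + \<epsilon>1 / (2 * (1 + \<epsilon>1))) * (1 - 1 / (2 * p))
               - 2 powr (-p + 1) * p - \<mu> > 0 \<and>
             2 powr (-p) * (\<gamma>1 + \<gamma>2) powr p - \<mu> / 2 * (\<gamma>1 + \<gamma>2)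
               \<ge> (2 + \<epsilon>1) * (SUP x\<in>ball 0 (Rstar + Tstar). \<bar>deriv f x\<bar> + \<bar>deriv g x\<bar>)"
  shows "\<forall>x\<in>ball 0 Rstar. \<forall>y\<in>ball 0 Rstar.
           \<bar>blowup_time p \<mu> f g \<gamma>1 \<gamma>2 Tstar x - blowup_time p \<mu> f g \<gamma>1 \<gamma>2 Tstar y\<bar>
             \<le> 1 / (1 + \<epsilon>0) * \<bar>x - y\<bar>"
proof -
  let ?S = "SUP x\<in>ball 0 (Rstar + Tstar). \<bar>deriv f x\<bar> + \<bar>deriv g x\<bar>"
  have f: "C_k_on (Suc 3) f (cball 0 (Rstar + Tstar))" and g: "C_k_on (Suc 3) g (cball 0 (Rstar + Tstar))"
    using A3 by (simp_all add: numeral_eq_Suc)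
  have L: "0 < Rstar + Tstar" using hR hT by simp
  have "nonlin p \<mu> (\<gamma>1 + \<gamma>2) 0 = 2 powr (-p) * (\<gamma>1 + \<gamma>2) powr p - \<mu> / 2 * (\<gamma>1 + \<gamma>2)"
    using hg1 hg2 by (simp add: nonlin_def)
  moreover have "\<mu> / 2 \<le> p * 2 powr (-p) * (\<gamma>1 + \<gamma>2) powr (p - 1)"
    using hgam by (intro nonlin_slope_condition[OF hp hmu]) simp
  ultimately interpret blowup_comparison p \<mu> f g \<gamma>1 \<gamma>2 Rstar Tstar ?S \<epsilon>0
    using hp hmu hT hg1 hg2 A2 A4 C_k_on_imp_continuous_on[OF f] C_k_on_imp_continuous_on[OF g]
      C_k_on_Suc_lipschitz_on_ball[OF L f g]
    by unfold_locales auto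
  show ?thesis using blowup_time_lipschitz by blast
qed

end
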